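(* Let $D$ be a non-commutative division ring with center $F$ and let $M$ be an irreducible locally solvable maximal subgroup of $D^*$. If $M$ is metabelian, then: (i) $M$ contains a unique maximal abelian normal subgroup $A$, and it satisfies $F^*\subsetneq A$ and $M'\le A$; (ii) $K=A\cup\{0\}$ is a maximal subfield of $D$.
   Context: $D^*$ is the multiplicative group of $D$; maximal subgroup = proper subgroup maximal among proper subgroups. A subgroup $G\le D^*$ is irreducible if the division subring $F(G)$ generated by $F\cup G$ equals $D$. Locally solvable: every finitely generated subgroup solvable. Metabelian: the derived subgroup $M'$ is abelian. A maximal abelian normal subgroup is an abelian normal subgroup not properly contained in another abelian normal subgroup. *)

theory Defs
  imports Main
begin

definition center :: "'a::division_ring set" where
  "center = {x. \<forall>y. x * y = y * x}"

definition mult_subgroup :: "'a::division_ring set \<Rightarrow> bool" where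
  "mult_subgroup G \<longleftrightarrow> G \<subseteq> - {0} \<and> 1 \<in> G \<and> (\<forall>x\<in>G. \<forall>y\<in>G. x * y \<in> G)
     \<and> (\<forall>x\<in>G. inverse x \<in> G)"

definition maximal_subgroup :: "'a::division_ring set \<Rightarrow> bool" where
  "maximal_subgroup M \<longleftrightarrow> mult_subgroup M \<and> M \<noteq> - {0} \<and>
     (\<forall>H. mult_subgroup H \<and> M \<subseteq> H \<and> H \<noteq> - {0} \<longrightarrow> H = M)"

definition division_subring :: "'a::division_ring set \<Rightarrow> bool" where
  "division_subring S \<longleftrightarrow> 0 \<in> S \<and> 1 \<in> S \<and> (\<forall>x\<in>S. \<forall>y\<in>S. x + y \<in> S \<and> x * y \<in> S)
     \<and> (\<forall>x\<in>S. - x \<in> S \<and> inverse x \<in> S)"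

definition division_subring_gen :: "'a::division_ring set \<Rightarrow> 'a set" where
  "division_subring_gen X = \<Inter> {S. division_subring S \<and> X \<subseteq> S}"

definition irreducible_subgroup :: "'a::division_ring set \<Rightarrow> bool" where
  "irreducible_subgroup G \<longleftrightarrow> division_subring_gen (center \<union> G) = UNIV"

definition subgroup_gen :: "'a::division_ring set \<Rightarrow> 'a set" where
  "subgroup_gen X = \<Inter> {H. mult_subgroup H \<and> X \<subseteq> H}"

definition commutator :: "'a::division_ring \<Rightarrow> 'a \<Rightarrow> 'a" where
  "commutator x y = inverse x * inverse y * x * y"

definition derived :: "'a::division_ring set \<Rightarrow> 'a set" where
  "derived H = subgroup_gen {commutator x y | x y. x \<in> H \<and> y \<in> H}"

definition solvable_subgroup :: "'a::division_ring set \<Rightarrow> bool" where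
  "solvable_subgroup H \<longleftrightarrow> (\<exists>n. (derived ^^ n) H = {1})"

definition locally_solvable :: "'a::division_ring set \<Rightarrow> bool" where
  "locally_solvable G \<longleftrightarrow> (\<forall>X. finite X \<and> X \<subseteq> G \<longrightarrow> solvable_subgroup (subgroup_gen X))"

definition abelian_set :: "'a::division_ring set \<Rightarrow> bool" where
  "abelian_set A \<longleftrightarrow> (\<forall>x\<in>A. \<forall>y\<in>A. x * y = y * x)"

definition metabelian :: "'a::division_ring set \<Rightarrow> bool" where
  "metabelian M \<longleftrightarrow> abelian_set (derived M)"

definition normal_subgroup :: "'a::division_ring set \<Rightarrow> 'a set \<Rightarrow> bool" where
  "normal_subgroup N M \<longleftrightarrow> mult_subgroup N \<and> N \<subseteq> M \<and>
     (\<forall>m\<in>M. \<forall>n\<in>N. inverse m * n * m \<in> N)"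

definition abelian_normal :: "'a::division_ring set \<Rightarrow> 'a set \<Rightarrow> bool" where
  "abelian_normal A M \<longleftrightarrow> normal_subgroup A M \<and> abelian_set A"

definition maximal_abelian_normal :: "'a::division_ring set \<Rightarrow> 'a set \<Rightarrow> bool" where
  "maximal_abelian_normal A M \<longleftrightarrow> abelian_normal A M \<and>
     (\<forall>B. abelian_normal B M \<and> A \<subseteq> B \<longrightarrow> B = A)"

definition subfield :: "'a::division_ring set \<Rightarrow> bool" where
  "subfield K \<longleftrightarrow> division_subring K \<and> abelian_set K"

definition maximal_subfield :: "'a::division_ring set \<Rightarrow> bool" where
  "maximal_subfield K \<longleftrightarrow> subfield K \<and> (\<forall>L. subfield L \<and> K \<subseteq> L \<longrightarrow> L = K)"

end

theory Submission
  imports Defs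
begin

text \<open>
  Let \<open>C\<close> be the centralizer of \<open>M'\<close>. If \<open>M'\<close> were central, then for \<open>x \<in> M\<close> the field
  \<open>F(x)\<close> would be normalized by \<open>M\<close>, so by Cartan--Brauer--Hua and maximality its units lie
  in \<open>M\<close>; comparing the conjugates of \<open>x\<close> and \<open>1 + x\<close> then makes \<open>M\<close> abelian, contradicting
  irreducibility. Hence \<open>M'\<close> is not central, and the same argument applied to the division
  subring \<open>C\<close> (normalized by \<open>M\<close>, and proper because \<open>M'\<close> is not central) shows \<open>C\<^sup>* \<subseteq> M\<close> and
  that \<open>C\<close> is commutative; being the centralizer of a commutative set inside itself it is a
  maximal subfield. Finally every abelian normal subgroup \<open>B\<close> centralizes \<open>C\<close>: for \<open>b \<in> B\<close>
  and \<open>c \<in> C\<close>, the commutator \<open>[b,c]\<close> commutes with \<open>b\<close>, which yields a quadratic relation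
  between \<open>c\<close> and its conjugate by \<open>b\<close>; using it for \<open>c\<close> and \<open>c + 1\<close> forces \<open>b\<close> and \<open>c\<close> to
  commute. So \<open>B \<subseteq> C_D(C) = C\<close>, i.e. \<open>A = C\<^sup>*\<close> is the unique maximal abelian normal subgroup.
\<close>

definition centralizer :: "'a::division_ring set \<Rightarrow> 'a set" where
  "centralizer Y = {z. \<forall>y\<in>Y. z * y = y * z}"

definition normalizes :: "'a::division_ring set \<Rightarrow> 'a set \<Rightarrow> bool" where
  "normalizes M S \<longleftrightarrow> (\<forall>m\<in>M. \<forall>s\<in>S. inverse m * s * m \<in> S)"

lemma
  assumes "division_subring S"
  shows division_subring_zero: "0 \<in> S"
    and division_subring_one: "1 \<in> S"
    and division_subring_add: "x \<in> S \<Longrightarrow> y \<in> S \<Longrightarrow> x + y \<in> S"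
    and division_subring_mult: "x \<in> S \<Longrightarrow> y \<in> S \<Longrightarrow> x * y \<in> S"
    and division_subring_uminus: "x \<in> S \<Longrightarrow> - x \<in> S"
    and division_subring_inverse: "x \<in> S \<Longrightarrow> inverse x \<in> S"
  using assms unfolding division_subring_def by blast+

lemma division_subring_diff: "division_subring S \<Longrightarrow> x \<in> S \<Longrightarrow> y \<in> S \<Longrightarrow> x - y \<in> S"
  by (metis diff_conv_add_uminus division_subring_add division_subring_uminus)

lemma division_subring_one_plus_nonzero:
  assumes "division_subring S" and "x \<notin> S"
  shows "1 + x \<noteq> 0"
proof
  assume "1 + x = 0"
  then have "x = - 1" by (simp add: eq_neg_iff_add_eq_0 add.commute)
  then show False using assms division_subring_uminus division_subring_one by metis
qed

lemma
  assumes "mult_subgroup M"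
  shows mult_subgroup_nonzero: "x \<in> M \<Longrightarrow> x \<noteq> 0"
    and mult_subgroup_one: "1 \<in> M"
    and mult_subgroup_mult: "x \<in> M \<Longrightarrow> y \<in> M \<Longrightarrow> x * y \<in> M"
    and mult_subgroup_inverse: "x \<in> M \<Longrightarrow> inverse x \<in> M"
  using assms unfolding mult_subgroup_def by blast+

lemma division_subring_Inter:
  "(\<And>S. S \<in> \<S> \<Longrightarrow> division_subring S) \<Longrightarrow> division_subring (\<Inter>\<S>)"
  unfolding division_subring_def by blast

lemma division_subring_division_subring_gen: "division_subring (division_subring_gen X)"
  unfolding division_subring_gen_def by (rule division_subring_Inter) blast

lemma subset_division_subring_gen: "X \<subseteq> division_subring_gen X"
  unfolding division_subring_gen_def by blast

lemma division_subring_gen_least: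
  "division_subring S \<Longrightarrow> X \<subseteq> S \<Longrightarrow> division_subring_gen X \<subseteq> S"
  unfolding division_subring_gen_def by blast

lemma mult_subgroup_Inter:
  "(\<And>H. H \<in> \<H> \<Longrightarrow> mult_subgroup H) \<Longrightarrow> \<H> \<noteq> {} \<Longrightarrow> mult_subgroup (\<Inter>\<H>)"
  unfolding mult_subgroup_def by (intro conjI ballI; blast)

lemma mult_subgroup_units: "mult_subgroup (- {0::'a::division_ring})"
  unfolding mult_subgroup_def by auto

lemma mult_subgroup_subgroup_gen:
  assumes "X \<subseteq> - {0}"
  shows "mult_subgroup (subgroup_gen X)"
  unfolding subgroup_gen_def
proof (rule mult_subgroup_Inter)
  have "- {0} \<in> {H. mult_subgroup H \<and> X \<subseteq> H}" using assms mult_subgroup_units by simp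
  then show "{H. mult_subgroup H \<and> X \<subseteq> H} \<noteq> {}" by blast
qed simp

lemma subset_subgroup_gen: "X \<subseteq> subgroup_gen X"
  unfolding subgroup_gen_def by blast

lemma subgroup_gen_least: "mult_subgroup H \<Longrightarrow> X \<subseteq> H \<Longrightarrow> subgroup_gen X \<subseteq> H"
  unfolding subgroup_gen_def by blast

lemma conj_mult:
  "(m::'a::division_ring) \<noteq> 0 \<Longrightarrow>
     inverse m * (x * y) * m = (inverse m * x * m) * (inverse m * y * m)"
  by (simp add: mult.assoc mult.assoc[symmetric, of m "inverse m"])

lemma conj_inverse:
  "(m::'a::division_ring) \<noteq> 0 \<Longrightarrow> inverse m * inverse x * m = inverse (inverse m * x * m)"
  by (cases "x = 0") (simp_all add: nonzero_inverse_mult_distrib mult.assoc)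

lemma conj_commutator:
  "(m::'a::division_ring) \<noteq> 0 \<Longrightarrow>
     inverse m * commutator x y * m = commutator (inverse m * x * m) (inverse m * y * m)"
  unfolding commutator_def by (simp add: conj_mult conj_inverse)

lemma conj_eq_mult_inverse_commutator:
  "(y::'a::division_ring) \<noteq> 0 \<Longrightarrow> x \<noteq> 0 \<Longrightarrow> inverse y * x * y = x * inverse (commutator y x)"
  unfolding commutator_def
  by (simp add: nonzero_inverse_mult_distrib mult.assoc mult.assoc[symmetric, of x "inverse x"])

lemma center_commute: "z \<in> center \<Longrightarrow> z * y = y * z"
  unfolding center_def by blast

lemma conj_center: "z \<in> center \<Longrightarrow> m \<noteq> 0 \<Longrightarrow> inverse m * z * m = (z::'a::division_ring)"
  using center_commute[of z m] by (simp add: mult.assoc mult.assoc[symmetric, of "inverse m" m])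

lemma division_subring_conj_preimage:
  assumes "(m::'a::division_ring) \<noteq> 0" and "division_subring S"
  shows "division_subring {s. inverse m * s * m \<in> S}"
  unfolding division_subring_def
proof (intro conjI ballI; clarify?)
  show "inverse m * 0 * m \<in> S" "inverse m * 1 * m \<in> S"
    using assms by (simp_all add: division_subring_zero division_subring_one)
  fix x y assume x: "inverse m * x * m \<in> S" and y: "inverse m * y * m \<in> S"
  show "inverse m * (- x) * m \<in> S" "inverse m * inverse x * m \<in> S"
    using assms x by (simp_all add: conj_inverse division_subring_uminus division_subring_inverse)
  show "inverse m * (x + y) * m \<in> S" "inverse m * (x * y) * m \<in> S"
    using assms x y
    by (simp_all add: conj_mult distrib_left distrib_right division_subring_add division_subring_mult)
qed

lemma mult_subgroup_conj_preimage:
  assumes "(m::'a::division_ring) \<noteq> 0" and "mult_subgroup H"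
  shows "mult_subgroup {s. s \<noteq> 0 \<and> inverse m * s * m \<in> H}"
  unfolding mult_subgroup_def
  using assms by (auto simp: conj_mult conj_inverse mult_subgroup_one mult_subgroup_mult
      mult_subgroup_inverse)

lemma normalizes_division_subring_gen:
  assumes "M \<subseteq> - {0}"
    and "\<And>m x. m \<in> M \<Longrightarrow> x \<in> X \<Longrightarrow> inverse m * x * m \<in> division_subring_gen X"
  shows "normalizes M (division_subring_gen X)"
  unfolding normalizes_def
proof (intro ballI)
  fix m s assume m: "m \<in> M" and s: "s \<in> division_subring_gen X"
  have "division_subring_gen X \<subseteq> {s. inverse m * s * m \<in> division_subring_gen X}"
    using m assms
    by (intro division_subring_gen_least division_subring_conj_preimage
        division_subring_division_subring_gen) auto
  then show "inverse m * s * m \<in> division_subring_gen X" using s by blast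
qed

lemma normalizes_subgroup_gen:
  assumes "M \<subseteq> - {0}" and "X \<subseteq> - {0}"
    and "\<And>m x. m \<in> M \<Longrightarrow> x \<in> X \<Longrightarrow> inverse m * x * m \<in> subgroup_gen X"
  shows "normalizes M (subgroup_gen X)"
  unfolding normalizes_def
proof (intro ballI)
  fix m s assume m: "m \<in> M" and s: "s \<in> subgroup_gen X"
  have "subgroup_gen X \<subseteq> {s. s \<noteq> 0 \<and> inverse m * s * m \<in> subgroup_gen X}"
    using m assms
    by (intro subgroup_gen_least mult_subgroup_conj_preimage mult_subgroup_subgroup_gen) auto
  then show "inverse m * s * m \<in> subgroup_gen X" using s by blast
qed

lemma commutator_nonzero: "x \<noteq> 0 \<Longrightarrow> y \<noteq> 0 \<Longrightarrow> commutator x y \<noteq> (0::'a::division_ring)"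
  unfolding commutator_def by simp

lemma commutator_in_derived: "x \<in> M \<Longrightarrow> y \<in> M \<Longrightarrow> commutator x y \<in> derived M"
  unfolding derived_def by (rule subsetD[OF subset_subgroup_gen]) blast

lemma commutators_nonzero:
  "mult_subgroup M \<Longrightarrow> {commutator x y |x y. x \<in> M \<and> y \<in> M} \<subseteq> - {0}"
  by (auto simp: commutator_nonzero mult_subgroup_nonzero)

lemma mult_subgroup_derived: "mult_subgroup M \<Longrightarrow> mult_subgroup (derived M)"
  unfolding derived_def by (intro mult_subgroup_subgroup_gen commutators_nonzero)

lemma normalizes_derived:
  assumes M: "mult_subgroup M"
  shows "normalizes M (derived M)"
  unfolding derived_def
proof (rule normalizes_subgroup_gen[OF _ commutators_nonzero[OF M]])
  show "M \<subseteq> - {0}" using M mult_subgroup_nonzero by blast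
  fix m c assume m: "m \<in> M" and "c \<in> {commutator x y |x y. x \<in> M \<and> y \<in> M}"
  then obtain x y where c: "c = commutator x y" "x \<in> M" "y \<in> M" by blast
  have conj_in: "inverse m * z * m \<in> M" if "z \<in> M" for z
    using M m that by (intro mult_subgroup_mult mult_subgroup_inverse)
  show "inverse m * c * m \<in> subgroup_gen {commutator x y |x y. x \<in> M \<and> y \<in> M}"
    using c conj_commutator[OF mult_subgroup_nonzero[OF M m]]
      commutator_in_derived[OF conj_in[OF c(2)] conj_in[OF c(3)]]
    unfolding derived_def by simp
qed

lemma inverse_commute:
  assumes "(z::'a::division_ring) * y = y * z"
  shows "inverse z * y = y * inverse z"
proof (cases "z = 0")
  case False
  have "inverse z * y = inverse z * (y * z) * inverse z" using False by (simp add: mult.assoc)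
  also have "\<dots> = inverse z * (z * y) * inverse z" using assms by simp
  also have "\<dots> = y * inverse z" using False by (simp add: mult.assoc[symmetric])
  finally show ?thesis .
qed simp

lemma division_subring_centralizer: "division_subring (centralizer Y)"
  unfolding division_subring_def centralizer_def
  by (auto simp: distrib_left distrib_right inverse_commute mult.assoc)
    (metis mult.assoc)

lemma center_eq_centralizer: "center = centralizer UNIV"
  unfolding center_def centralizer_def by simp

lemma division_subring_center: "division_subring (center::'a::division_ring set)"
  unfolding center_eq_centralizer by (rule division_subring_centralizer)

lemma center_subset_centralizer: "center \<subseteq> centralizer Y"
  unfolding center_def centralizer_def by blast

lemma centralizer_antimono: "X \<subseteq> Y \<Longrightarrow> centralizer Y \<subseteq> centralizer X"
  unfolding centralizer_def by blast

lemma subset_centralizer_centralizer: "X \<subseteq> centralizer (centralizer X)"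
  unfolding centralizer_def by auto

lemma abelian_set_iff_subset_centralizer: "abelian_set X \<longleftrightarrow> X \<subseteq> centralizer X"
  unfolding abelian_set_def centralizer_def by blast

lemma abelian_set_division_subring_gen:
  assumes "abelian_set X"
  shows "abelian_set (division_subring_gen X)"
proof -
  have "division_subring_gen X \<subseteq> centralizer X"
    using assms division_subring_centralizer division_subring_gen_least
    unfolding abelian_set_iff_subset_centralizer by blast
  then have "X \<subseteq> centralizer (division_subring_gen X)"
    unfolding centralizer_def by fastforce
  then have "division_subring_gen X \<subseteq> centralizer (division_subring_gen X)"
    by (rule division_subring_gen_least[OF division_subring_centralizer])
  then show ?thesis unfolding abelian_set_iff_subset_centralizer .
qed

lemma abelian_set_center_Un: "abelian_set X \<Longrightarrow> abelian_set (center \<union> X)"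
  unfolding abelian_set_def by (metis Un_iff center_commute)

lemma normalizes_centralizer:
  assumes M: "mult_subgroup M" and Y: "normalizes M Y"
  shows "normalizes M (centralizer Y)"
  unfolding normalizes_def
proof (intro ballI)
  fix m z assume m: "m \<in> M" and z: "z \<in> centralizer Y"
  have m0: "m \<noteq> 0" using mult_subgroup_nonzero[OF M m] .
  show "inverse m * z * m \<in> centralizer Y"
    unfolding centralizer_def
  proof (intro CollectI ballI)
    fix k assume k: "k \<in> Y"
    define k' where "k' = m * k * inverse m"
    have "k' \<in> Y"
      using Y mult_subgroup_inverse[OF M m] k unfolding normalizes_def k'_def
      by (metis inverse_inverse_eq)
    then have zk': "z * k' = k' * z" using z unfolding centralizer_def by blast
    have k_eq: "k = inverse m * k' * m"
      using m0 unfolding k'_def by (simp add: mult.assoc mult.assoc[symmetric, of "inverse m" m])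
    have "inverse m * z * m * k = inverse m * (z * k') * m"
      using m0 unfolding k_eq by (simp add: mult.assoc mult.assoc[symmetric, of m "inverse m"])
    also have "\<dots> = k * (inverse m * z * m)"
      using m0 unfolding zk' k_eq by (simp add: mult.assoc mult.assoc[symmetric, of m "inverse m"])
    finally show "inverse m * z * m * k = k * (inverse m * z * m)" .
  qed
qed

lemma maximal_subfield_centralizer:
  assumes "abelian_set X" and "abelian_set (centralizer X)"
  shows "maximal_subfield (centralizer X)"
  unfolding maximal_subfield_def subfield_def
proof (intro conjI allI impI division_subring_centralizer assms(2))
  fix L assume L: "(division_subring L \<and> abelian_set L) \<and> centralizer X \<subseteq> L"
  moreover have "X \<subseteq> L" using L assms(1) abelian_set_iff_subset_centralizer by blast
  ultimately have "L \<subseteq> centralizer X" unfolding abelian_set_def centralizer_def by blast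
  then show "L = centralizer X" using L by blast
qed

section \<open>The Cartan--Brauer--Hua theorem\<close>

lemma cartan_brauer_hua_commute:
  assumes S: "division_subring S"
    and N: "\<And>x s. x \<noteq> 0 \<Longrightarrow> s \<in> S \<Longrightarrow> x * s * inverse x \<in> S"
    and a: "a \<notin> S" and k: "k \<in> S"
  shows "a * k = k * a"
proof -
  have a0: "a \<noteq> 0" using a division_subring_zero[OF S] by blast
  have a1: "1 + a \<noteq> 0" using division_subring_one_plus_nonzero[OF S a] .
  define k1 where "k1 = a * k * inverse a"
  define k2 where "k2 = (1 + a) * k * inverse (1 + a)"
  have k1S: "k1 \<in> S" and k2S: "k2 \<in> S" using N a0 a1 k unfolding k1_def k2_def by auto
  have e1: "a * k = k1 * a" using a0 unfolding k1_def by (simp add: mult.assoc)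
  have "(1 + a) * k = k2 * (1 + a)" using a1 unfolding k2_def by (simp add: mult.assoc)
  then have "k + k1 * a = k2 + k2 * a" using e1 by (simp add: distrib_left distrib_right)
  then have e3: "k - k2 = (k2 - k1) * a" by (simp add: algebra_simps)
  have "k2 = k1"
  proof (rule ccontr)
    assume "k2 \<noteq> k1"
    then have "a = inverse (k2 - k1) * (k - k2)" using e3 by (simp add: mult.assoc[symmetric])
    moreover have "inverse (k2 - k1) * (k - k2) \<in> S"
      using S k k1S k2S
      by (intro division_subring_mult division_subring_inverse division_subring_diff) auto
    ultimately show False using a by simp
  qed
  then show ?thesis using e1 e3 by simp
qed

theorem cartan_brauer_hua:
  assumes S: "division_subring S" and proper: "S \<noteq> UNIV" and inv: "normalizes (- {0}) S"
  shows "S \<subseteq> center"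
proof
  obtain a where a: "a \<notin> S" using proper by blast
  have N: "x * s * inverse x \<in> S" if "x \<noteq> 0" "s \<in> S" for x s
    using inv that unfolding normalizes_def
    by (metis ComplI inverse_inverse_eq inverse_nonzero_iff_nonzero singletonD)
  fix k assume k: "k \<in> S"
  have "k * y = y * k" for y
  proof (cases "y \<in> S")
    case False
    then show ?thesis using cartan_brauer_hua_commute[OF S N False k] by simp
  next
    case True
    have "a + y \<notin> S" using a True division_subring_diff[OF S, of "a + y" y] by auto
    then have "(a + y) * k = k * (a + y)" using cartan_brauer_hua_commute[OF S N _ k] by blast
    moreover have "a * k = k * a" using cartan_brauer_hua_commute[OF S N a k] .
    ultimately show ?thesis by (simp add: distrib_left distrib_right)
  qed
  then show "k \<in> center" unfolding center_def by blast
qed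

section \<open>Division subrings normalized by a maximal subgroup\<close>

definition normalizer :: "'a::division_ring set \<Rightarrow> 'a set" where
  "normalizer S = {x. x \<noteq> 0 \<and> (\<forall>s\<in>S. inverse x * s * x \<in> S \<and> x * s * inverse x \<in> S)}"

lemma mult_subgroup_normalizer: "mult_subgroup (normalizer S)"
  unfolding mult_subgroup_def
proof (intro conjI ballI)
  show "normalizer S \<subseteq> - {0}" "1 \<in> normalizer S" unfolding normalizer_def by auto
  fix x y assume x: "x \<in> normalizer S" and y: "y \<in> normalizer S"
  then have x0: "x \<noteq> 0" and y0: "y \<noteq> 0" unfolding normalizer_def by auto
  show "inverse x \<in> normalizer S" using x unfolding normalizer_def by simp
  have "inverse (x * y) * s * (x * y) = inverse y * (inverse x * s * x) * y"
    and "x * y * s * inverse (x * y) = x * (y * s * inverse y) * inverse x" for s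
    using x0 y0 by (simp_all add: nonzero_inverse_mult_distrib mult.assoc)
  then show "x * y \<in> normalizer S" using x y x0 y0 unfolding normalizer_def by simp
qed

lemma maximal_subgroup_contains_normalized_units:
  assumes max: "maximal_subgroup M" and S: "division_subring S" and NM: "normalizes M S"
    and noncentral: "\<not> S \<subseteq> center" and proper: "S \<noteq> UNIV"
  shows "S - {0} \<subseteq> M"
proof -
  have MS: "mult_subgroup M" using max unfolding maximal_subgroup_def by blast
  have "M \<subseteq> normalizer S"
  proof
    fix m assume m: "m \<in> M"
    have "inverse m \<in> M" using mult_subgroup_inverse[OF MS m] .
    then have "\<forall>s\<in>S. m * s * inverse m \<in> S"
      using NM unfolding normalizes_def by (metis inverse_inverse_eq)
    then show "m \<in> normalizer S"
      using NM m mult_subgroup_nonzero[OF MS m] unfolding normalizer_def normalizes_def by blast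
  qed
  moreover have "normalizer S \<noteq> - {0}"
  proof
    assume "normalizer S = - {0}"
    then have "normalizes (- {0}) S" unfolding normalizer_def normalizes_def by blast
    then show False using cartan_brauer_hua[OF S proper] noncentral by blast
  qed
  ultimately have "normalizer S = M"
    using max mult_subgroup_normalizer unfolding maximal_subgroup_def by blast
  moreover have "S - {0} \<subseteq> normalizer S"
    using S unfolding normalizer_def by (auto intro!: division_subring_mult division_subring_inverse)
  ultimately show ?thesis by blast
qed

text \<open>
  With \<open>y\<inverse> x y = x \<alpha>\<close> and \<open>y\<inverse> (1 + x) y = (1 + x) \<beta>\<close>, subtracting gives
  \<open>1 - \<beta> = x (\<beta> - \<alpha>)\<close>: either \<open>\<alpha> \<noteq> \<beta>\<close> and \<open>x = (1 - \<beta>) (\<beta> - \<alpha>)\<inverse> \<in> T\<close>, or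
  \<open>\<alpha> = \<beta> = 1\<close> and \<open>y\<close> commutes with \<open>x\<close>.
\<close>
lemma mem_or_commute_if_commutators_mem:
  fixes x y :: "'a::division_ring"
  assumes T: "division_subring T" and y: "y \<noteq> 0" and x: "x \<noteq> 0" and x1: "1 + x \<noteq> 0"
    and c1: "commutator y x \<in> T" and c2: "commutator y (1 + x) \<in> T"
  shows "x \<in> T \<or> x * y = y * x"
proof -
  define \<alpha> where "\<alpha> = inverse (commutator y x)"
  define \<beta> where "\<beta> = inverse (commutator y (1 + x))"
  have "inverse y * (1 + x) * y = 1 + inverse y * x * y"
    using y by (simp add: distrib_left distrib_right)
  then have "1 + x * \<alpha> = \<beta> + x * \<beta>"
    using conj_eq_mult_inverse_commutator[OF y x] conj_eq_mult_inverse_commutator[OF y x1]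
    unfolding \<alpha>_def \<beta>_def by (simp add: distrib_right)
  then have e: "1 - \<beta> = x * (\<beta> - \<alpha>)" by (simp add: algebra_simps)
  show ?thesis
  proof (cases "\<beta> = \<alpha>")
    case False
    then have "x = (1 - \<beta>) * inverse (\<beta> - \<alpha>)" using e by (simp add: mult.assoc)
    moreover have "(1 - \<beta>) * inverse (\<beta> - \<alpha>) \<in> T"
      unfolding \<alpha>_def \<beta>_def using T c1 c2
      by (intro division_subring_mult division_subring_inverse division_subring_diff
          division_subring_one)
    ultimately show ?thesis by simp
  next
    case True
    then have "inverse y * x * y = x"
      using e conj_eq_mult_inverse_commutator[OF y x] unfolding \<alpha>_def by simp
    then have "y * (inverse y * x * y) = y * x" by simp
    then show ?thesis using y by (simp add: mult.assoc[symmetric])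
  qed
qed

section \<open>The derived subgroup is not central\<close>

lemma one_plus_mem_if_derived_central:
  fixes M :: "'a::division_ring set"
  assumes noncomm: "\<not> abelian_set (UNIV :: 'a set)" and max: "maximal_subgroup M"
    and central: "derived M \<subseteq> center" and x: "x \<in> M" "x \<notin> center"
  shows "1 + x \<in> M"
proof -
  have MS: "mult_subgroup M" using max unfolding maximal_subgroup_def by blast
  define L where "L = division_subring_gen (center \<union> {x})"
  have L: "division_subring L" unfolding L_def by (rule division_subring_division_subring_gen)
  have xL: "x \<in> L" and cL: "center \<subseteq> L" unfolding L_def using subset_division_subring_gen by blast+
  have "abelian_set (center \<union> {x})" unfolding abelian_set_def center_def by auto
  then have "abelian_set L" unfolding L_def by (rule abelian_set_division_subring_gen)
  then have proper: "L \<noteq> UNIV" using noncomm by blast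
  \<comment> \<open>conjugation by \<open>m\<close> multiplies \<open>x\<close> by the central element \<open>[m,x]\<inverse>\<close>\<close>
  have "normalizes M L"
    unfolding L_def
  proof (rule normalizes_division_subring_gen)
    show "M \<subseteq> - {0}" using MS mult_subgroup_nonzero by blast
    fix m z assume m: "m \<in> M" and z: "z \<in> center \<union> {x}"
    have m0: "m \<noteq> 0" using mult_subgroup_nonzero[OF MS m] .
    have "commutator m x \<in> L" using commutator_in_derived[OF m x(1)] central cL by blast
    then have "x * inverse (commutator m x) \<in> L"
      using L xL by (intro division_subring_mult division_subring_inverse)
    then show "inverse m * z * m \<in> division_subring_gen (center \<union> {x})"
      using z conj_center[OF _ m0] cL
        conj_eq_mult_inverse_commutator[OF m0 mult_subgroup_nonzero[OF MS x(1)]]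
      unfolding L_def by auto
  qed
  then have "L - {0} \<subseteq> M"
    using maximal_subgroup_contains_normalized_units[OF max L] xL x(2) proper by blast
  moreover have "1 + x \<in> L" using L xL by (intro division_subring_add division_subring_one)
  moreover have "1 + x \<noteq> 0" using division_subring_one_plus_nonzero[OF division_subring_center x(2)] .
  ultimately show ?thesis by blast
qed

lemma abelian_if_derived_central:
  fixes M :: "'a::division_ring set"
  assumes noncomm: "\<not> abelian_set (UNIV :: 'a set)" and max: "maximal_subgroup M"
    and central: "derived M \<subseteq> center"
  shows "abelian_set M"
  unfolding abelian_set_def
proof (intro ballI)
  have MS: "mult_subgroup M" using max unfolding maximal_subgroup_def by blast
  fix x y assume x: "x \<in> M" and y: "y \<in> M"
  show "x * y = y * x"
  proof (cases "x \<in> center")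
    case True
    then show ?thesis by (rule center_commute)
  next
    case False
    have x1: "1 + x \<in> M" using one_plus_mem_if_derived_central[OF noncomm max central x False] .
    show ?thesis
      using mem_or_commute_if_commutators_mem[OF division_subring_center,
          OF mult_subgroup_nonzero[OF MS y] mult_subgroup_nonzero[OF MS x]
          mult_subgroup_nonzero[OF MS x1]]
        commutator_in_derived[OF y x] commutator_in_derived[OF y x1] central False
      by blast
  qed
qed

lemma derived_not_subset_center:
  fixes M :: "'a::division_ring set"
  assumes noncomm: "\<not> abelian_set (UNIV :: 'a set)" and max: "maximal_subgroup M"
    and irr: "irreducible_subgroup M"
  shows "\<not> derived M \<subseteq> center"
proof
  assume "derived M \<subseteq> center"
  then have "abelian_set (division_subring_gen (center \<union> M))"
    using abelian_if_derived_central[OF noncomm max]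
    by (intro abelian_set_division_subring_gen abelian_set_center_Un)
  then show False using irr noncomm unfolding irreducible_subgroup_def by simp
qed

section \<open>The centralizer of the derived subgroup\<close>

lemma centralizer_derived_units_subset:
  fixes M :: "'a::division_ring set"
  assumes max: "maximal_subgroup M" and meta: "metabelian M"
    and noncentral: "\<not> derived M \<subseteq> center"
  shows "centralizer (derived M) - {0} \<subseteq> M"
proof (rule maximal_subgroup_contains_normalized_units[OF max division_subring_centralizer])
  have MS: "mult_subgroup M" using max unfolding maximal_subgroup_def by blast
  show "normalizes M (centralizer (derived M))"
    using normalizes_centralizer[OF MS normalizes_derived[OF MS]] .
  obtain d where d: "d \<in> derived M" "d \<notin> center" using noncentral by blast
  then show "\<not> centralizer (derived M) \<subseteq> center"
    using meta unfolding metabelian_def abelian_set_iff_subset_centralizer by blast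
  show "centralizer (derived M) \<noteq> UNIV"
  proof
    assume "centralizer (derived M) = UNIV"
    then have "y * d = d * y" for y using d(1) unfolding centralizer_def by blast
    then show False using d(2) unfolding center_def by auto
  qed
qed

lemma abelian_centralizer_derived:
  fixes M :: "'a::division_ring set"
  assumes MS: "mult_subgroup M" and CM: "centralizer (derived M) - {0} \<subseteq> M"
  shows "abelian_set (centralizer (derived M))"
  unfolding abelian_set_def
proof (intro ballI)
  let ?C = "centralizer (derived M)"
  fix x y assume x: "x \<in> ?C" and y: "y \<in> ?C"
  show "x * y = y * x"
  proof (cases "x = 0 \<or> y = 0 \<or> 1 + x = 0")
    case True
    then show ?thesis
      by (metis add.commute eq_neg_iff_add_eq_0 mult_minus1 mult_minus1_right mult_zero_left
          mult_zero_right)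
  next
    case False
    have x1: "1 + x \<in> ?C"
      using x by (intro division_subring_add division_subring_one division_subring_centralizer)
    have "x \<in> centralizer ?C \<or> x * y = y * x"
    proof (rule mem_or_commute_if_commutators_mem[OF division_subring_centralizer])
      show "commutator y x \<in> centralizer ?C" "commutator y (1 + x) \<in> centralizer ?C"
        using x y x1 False CM subset_centralizer_centralizer
        by (blast intro: commutator_in_derived)+
    qed (use False in auto)
    then show ?thesis using y unfolding centralizer_def by auto
  qed
qed

section \<open>Abelian normal subgroups\<close>

lemma abelian_normal_units:
  assumes MS: "mult_subgroup M" and C: "division_subring C" "abelian_set C"
    and NC: "normalizes M C" and CM: "C - {0} \<subseteq> M"
  shows "abelian_normal (C - {0}) M"
  unfolding abelian_normal_def normal_subgroup_def
proof (intro conjI ballI)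
  show "mult_subgroup (C - {0})" unfolding mult_subgroup_def
    using C by (auto intro: division_subring_mult division_subring_inverse division_subring_one)
  show "abelian_set (C - {0})" using C unfolding abelian_set_def by blast
  fix m n assume "m \<in> M" "n \<in> C - {0}"
  then show "inverse m * n * m \<in> C - {0}"
    using NC mult_subgroup_nonzero[OF MS] unfolding normalizes_def by auto
qed (use CM in simp)

text \<open>
  For \<open>s = b\<inverse> c b\<close> the commutator \<open>e = [b,c] = s\<inverse> c\<close> lies in the abelian normal subgroup
  \<open>B\<close> and in \<open>C\<close>, hence commutes with \<open>b\<close> and with \<open>s\<close>; so \<open>c = s e\<close> and \<open>s = t e\<close>
  with \<open>t = b\<inverse> s b\<close>.
\<close>
lemma conj_square_eq:
  assumes B: "abelian_normal B M" and C: "division_subring C" "abelian_set C"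
    and NC: "normalizes M C" and CM: "C - {0} \<subseteq> M"
    and b: "b \<in> B" and c: "c \<in> C" "c \<noteq> 0"
  shows "(inverse b * c * b) * (inverse b * c * b) = (inverse b * (inverse b * c * b) * b) * c"
proof -
  have BS: "mult_subgroup B" and BM: "B \<subseteq> M"
    and Bn: "\<forall>m\<in>M. \<forall>n\<in>B. inverse m * n * m \<in> B" and Bab: "abelian_set B"
    using B unfolding abelian_normal_def normal_subgroup_def by auto
  have b0: "b \<noteq> 0" using mult_subgroup_nonzero[OF BS b] .
  define s where "s = inverse b * c * b"
  define t where "t = inverse b * s * b"
  define e where "e = commutator b c"
  have sC: "s \<in> C" using NC BM b c unfolding s_def normalizes_def by blast
  have s0: "s \<noteq> 0" using b0 c unfolding s_def by simp
  have "inverse b * (inverse c * b * c) \<in> B"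
    using Bn CM b c by (blast intro: mult_subgroup_mult[OF BS] mult_subgroup_inverse[OF BS])
  then have "e \<in> B" unfolding e_def commutator_def by (simp add: mult.assoc)
  then have "e * b = b * e" using Bab b unfolding abelian_set_def by blast
  then have eb: "inverse b * e * b = e" using b0 by (simp add: mult.assoc mult.assoc[symmetric, of "inverse b" b])
  have es: "e = inverse s * c"
    using conj_inverse[OF b0, of c] unfolding e_def commutator_def s_def by (simp add: mult.assoc)
  have eC: "e \<in> C" unfolding es using C sC c by (intro division_subring_mult division_subring_inverse)
  have c_se: "c = s * e" using es s0 by (simp add: mult.assoc[symmetric])
  have "s = inverse b * (s * e) * b" using c_se unfolding s_def by simp
  also have "\<dots> = t * e" using conj_mult[OF b0, of s e] eb unfolding t_def by simp
  finally have "s * s = t * (e * s)" by (simp add: mult.assoc)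
  also have "e * s = s * e" using C(2) eC sC unfolding abelian_set_def by blast
  finally show ?thesis using c_se unfolding s_def t_def by (simp add: mult.assoc)
qed

lemma eq_if_square_relations:
  fixes s t c :: "'a::division_ring"
  assumes sc: "s * c = c * s" and h1: "s * s = t * c"
    and h2: "(s + 1) * (s + 1) = (t + 1) * (c + 1)"
  shows "s = c"
proof -
  have "s * s + s + s + 1 = t * c + t + c + 1" using h2 by (simp add: algebra_simps)
  then have e: "s + s = t + c" using h1 by simp
  have "(s - c) * (s - c) = s * s - (s + s) * c + c * c" using sc by (simp add: algebra_simps)
  also have "\<dots> = 0" using e h1 by (simp add: algebra_simps)
  finally show ?thesis by simp
qed

lemma abelian_normal_subset_centralizer:
  assumes B: "abelian_normal B M" and C: "division_subring C" "abelian_set C"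
    and NC: "normalizes M C" and CM: "C - {0} \<subseteq> M"
  shows "B \<subseteq> centralizer C"
proof
  fix b assume b: "b \<in> B"
  have bM: "b \<in> M" and b0: "b \<noteq> 0"
    using B b mult_subgroup_nonzero unfolding abelian_normal_def normal_subgroup_def by blast+
  have "b * c = c * b" if c: "c \<in> C" for c
  proof (cases "c = 0 \<or> c + 1 = 0")
    case True
    then show ?thesis
      by (metis eq_neg_iff_add_eq_0 mult_minus1 mult_minus1_right mult_zero_left mult_zero_right)
  next
    case False
    define s where "s = inverse b * c * b"
    define t where "t = inverse b * s * b"
    have c1: "c + 1 \<in> C" using C c by (intro division_subring_add division_subring_one)
    have sC: "s \<in> C" using NC bM c unfolding s_def normalizes_def by blast
    have e1: "inverse b * (c + 1) * b = s + 1" unfolding s_def using b0 by (simp add: algebra_simps)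
    have e2: "inverse b * (s + 1) * b = t + 1" unfolding t_def using b0 by (simp add: algebra_simps)
    have "s = c"
    proof (rule eq_if_square_relations)
      show "s * c = c * s" using C(2) sC c unfolding abelian_set_def by blast
      show "s * s = t * c"
        using conj_square_eq[OF B C NC CM b c] False unfolding s_def t_def by simp
      show "(s + 1) * (s + 1) = (t + 1) * (c + 1)"
        using conj_square_eq[OF B C NC CM b c1] False e1 e2 by simp
    qed
    then have "b * (inverse b * c * b) = b * c" unfolding s_def by simp
    then show ?thesis using b0 by (simp add: mult.assoc[symmetric])
  qed
  then show "b \<in> centralizer C" unfolding centralizer_def by blast
qed

lemma unique_maximal_abelian_normal:
  assumes "abelian_normal A M" and "\<And>B. abelian_normal B M \<Longrightarrow> B \<subseteq> A"
  shows "maximal_abelian_normal B M \<longleftrightarrow> B = A"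
  using assms unfolding maximal_abelian_normal_def by blast

theorem theorem2p3:
  fixes M :: "'a::division_ring set"
  assumes noncomm: "\<exists>a b :: 'a. a * b \<noteq> b * a"
    and max: "maximal_subgroup M"
    and irr: "irreducible_subgroup M"
    and ls: "locally_solvable M"
    and meta: "metabelian M"
  shows "\<exists>A. (\<forall>B. maximal_abelian_normal B M \<longleftrightarrow> B = A)
           \<and> center - {0} \<subset> A \<and> derived M \<subseteq> A
           \<and> maximal_subfield (A \<union> {0})"
proof -
  let ?C = "centralizer (derived M)"
  have MS: "mult_subgroup M" using max unfolding maximal_subgroup_def by blast
  have D: "abelian_set (derived M)" using meta unfolding metabelian_def .
  have "\<not> abelian_set (UNIV :: 'a set)" using noncomm unfolding abelian_set_def by blast
  then have noncentral: "\<not> derived M \<subseteq> center" using derived_not_subset_center max irr by blast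
  have CM: "?C - {0} \<subseteq> M" using centralizer_derived_units_subset[OF max meta noncentral] .
  have Cab: "abelian_set ?C" using abelian_centralizer_derived[OF MS CM] .
  have NC: "normalizes M ?C" using normalizes_centralizer[OF MS normalizes_derived[OF MS]] .
  have DC: "derived M \<subseteq> ?C" using D abelian_set_iff_subset_centralizer by blast
  have maximum: "B \<subseteq> ?C - {0}" if B: "abelian_normal B M" for B
  proof -
    have "B \<subseteq> centralizer ?C"
      using abelian_normal_subset_centralizer[OF B division_subring_centralizer Cab NC CM] .
    also have "\<dots> \<subseteq> ?C" using centralizer_antimono[OF DC] .
    finally show ?thesis
      using B unfolding abelian_normal_def normal_subgroup_def mult_subgroup_def by blast
  qed
  have D0: "0 \<notin> derived M"
    using mult_subgroup_derived[OF MS] unfolding mult_subgroup_def by blast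
  show ?thesis
  proof (intro exI[of _ "?C - {0}"] conjI allI)
    show "maximal_abelian_normal B M \<longleftrightarrow> B = ?C - {0}" for B
      using unique_maximal_abelian_normal
        abelian_normal_units[OF MS division_subring_centralizer Cab NC CM] maximum by blast
    show "center - {0} \<subset> ?C - {0}" using noncentral center_subset_centralizer DC D0 by blast
    show "derived M \<subseteq> ?C - {0}" using DC D0 by blast
    have "?C - {0} \<union> {0} = ?C" using division_subring_zero[OF division_subring_centralizer] by blast
    then show "maximal_subfield (?C - {0} \<union> {0})" using maximal_subfield_centralizer[OF D Cab] by simp
  qed
qed

end
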